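(* Let $X$ be uniformly distributed on $[-\pi,\pi]$. Set $\varphi_0\equiv 1$, $\varphi_{2k}(x)=\sqrt{2}\cos(kx)$ and $\varphi_{2k+1}(x)=\sqrt{2}\sin(kx)$ for $k\geq 1$, and for $l\in\mathbb{N}$ let $m_D=\mathrm{Span}\{\varphi_j : j=0,\dots,2l\}$, of linear dimension $D=2l+1$. If $m_D$ satisfies the small-ball condition with constants $(\beta_0,\kappa_0)$, i.e. $\mathbb{P}(|s(X)|\geq\kappa_0\|s\|_2)\geq\beta_0$ for every $s\in m_D$ (with $\kappa_0,\beta_0>0$), then \[ \beta_0\leq C\,\kappa_0^{-1/2}D^{-3/4} \] for some absolute constant $C>0$ (the paper states that $C=3^{1/4}\sqrt{2}$ works).
   Context: $\|\cdot\|_2$ denotes the norm of $L_2(P^X)$, $P^X$ being the uniform distribution on $[-\pi,\pi]$. *)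

theory Defs
  imports "HOL-Probability.Probability"
begin

definition phi :: "nat \<Rightarrow> real \<Rightarrow> real" where
  "phi j x = (if j = 0 then 1
              else if even j then sqrt 2 * cos (real (j div 2) * x)
              else sqrt 2 * sin (real ((j + 1) div 2) * x))"

definition mD :: "nat \<Rightarrow> (real \<Rightarrow> real) set" where
  "mD l = {s. \<exists>c :: nat \<Rightarrow> real. s = (\<lambda>x. \<Sum>j\<le>2*l. c j * phi j x)}"

definition unifX :: "real measure" where
  "unifX = uniform_measure lborel {-pi..pi}"

definition L2norm :: "(real \<Rightarrow> real) \<Rightarrow> real" where
  "L2norm s = sqrt (\<integral>x. (s x)\<^sup>2 \<partial>unifX)"

definition small_ball :: "(real \<Rightarrow> real) set \<Rightarrow> real \<Rightarrow> real \<Rightarrow> bool" where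
  "small_ball M beta0 kappa0 \<longleftrightarrow>
     (\<forall>s\<in>M. measure unifX {x \<in> space unifX. \<bar>s x\<bar> \<ge> kappa0 * L2norm s} \<ge> beta0)"

end

theory Submission
  imports Defs
begin

text \<open>The extremal function is the Fej\'er kernel \<open>G\<^sub>n\<close> with \<open>n = l + 1\<close>, a nonnegative cosine
  polynomial of degree \<open>l\<close>, hence an element of \<open>m\<^sub>D\<close>. It concentrates near the origin:
  \<open>G\<^sub>n \<ge> n\<^sup>2/2\<close> on \<open>|x| \<le> 1/n\<close>, so \<open>\<parallel>G\<^sub>n\<parallel>\<^sub>2\<^sup>2 \<ge> n\<^sup>3/(4\<pi>)\<close>, while Jordan's inequality gives
  \<open>G\<^sub>n(x) \<le> (\<pi>/x)\<^sup>2\<close>. Thus \<open>|G\<^sub>n| \<ge> t\<close> only on an interval of length \<open>2\<pi>/\<surd>t\<close>, i.e. with probability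
  at most \<open>1/\<surd>t\<close>. Taking \<open>t = \<kappa>\<^sub>0\<parallel>G\<^sub>n\<parallel>\<^sub>2\<close> in the small-ball condition yields
  \<open>\<beta>\<^sub>0 \<le> (\<kappa>\<^sub>0\<parallel>G\<^sub>n\<parallel>\<^sub>2)\<^sup>-\<^sup>1\<^sup>/\<^sup>2 \<le> 4 \<kappa>\<^sub>0\<^sup>-\<^sup>1\<^sup>/\<^sup>2 D\<^sup>-\<^sup>3\<^sup>/\<^sup>4\<close>.\<close>

lemma sin_ge_jordan:
  assumes "0 \<le> y" "y \<le> pi/2"
  shows "2 * y / pi \<le> sin y"
proof -
  have convex: "convex_on {0..pi} (\<lambda>x. - sin x)"
  proof (rule convex_on_realI[where f'="\<lambda>x. - cos x"])
    show "((\<lambda>x. - sin x) has_real_derivative - cos x) (at x)" for x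
      by (auto intro!: derivative_eq_intros)
    show "- cos x \<le> - cos y" if "x \<in> {0..pi}" "y \<in> {0..pi}" "x \<le> y" for x y
      using that cos_monotone_0_pi_le by auto
  qed simp
  define t where "t = 2 * y / pi"
  have t: "0 \<le> t" "t \<le> 1" using assms by (auto simp: t_def field_simps)
  have "- sin ((1 - t) *\<^sub>R 0 + t *\<^sub>R (pi/2)) \<le> (1 - t) * - sin 0 + t * - sin (pi/2)"
    by (rule convex_onD[OF convex]) (use t in auto)
  moreover have "(1 - t) *\<^sub>R 0 + t *\<^sub>R (pi/2) = y" by (simp add: t_def)
  ultimately show ?thesis by (simp add: t_def)
qed

lemma abs_sin_half_ge:
  assumes "\<bar>x\<bar> \<le> pi"
  shows "\<bar>x\<bar> / pi \<le> \<bar>sin (x/2)\<bar>"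
  using sin_ge_jordan[of "\<bar>x\<bar>/2"] assms by (cases "x \<ge> 0") auto

lemma sin_squared_diff: "sin (a::real) ^ 2 - sin b ^ 2 = sin (a + b) * sin (a - b)"
proof -
  have "sin (a + b) * sin (a - b) = (sin a * cos b)^2 - (cos a * sin b)^2"
    unfolding sin_add sin_diff power2_eq_square by (simp add: algebra_simps)
  also have "\<dots> = sin a ^ 2 * (1 - sin b ^ 2) - (1 - sin a ^ 2) * sin b ^ 2"
    by (simp add: power_mult_distrib cos_squared_eq)
  finally show ?thesis by (simp add: algebra_simps)
qed

definition dirichlet_kernel :: "nat \<Rightarrow> real \<Rightarrow> real" where
  "dirichlet_kernel m x = 1 + 2 * (\<Sum>k=1..m. cos (real k * x))"

text \<open>This is \<open>n\<close> times the usual (normalised) Fej\'er kernel.\<close>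
definition fejer_kernel :: "nat \<Rightarrow> real \<Rightarrow> real" where
  "fejer_kernel n x = real n + 2 * (\<Sum>k=1..n. (real n - real k) * cos (real k * x))"

lemma dirichlet_kernel_mult_sin: "dirichlet_kernel m x * sin (x/2) = sin ((real m + 1/2) * x)"
proof (induction m)
  case 0
  then show ?case by (simp add: dirichlet_kernel_def)
next
  case (Suc m)
  have "dirichlet_kernel (Suc m) x = dirichlet_kernel m x + 2 * cos ((real m + 1) * x)"
    by (simp add: dirichlet_kernel_def algebra_simps)
  then have "dirichlet_kernel (Suc m) x * sin (x/2)
      = sin ((real m + 1/2) * x) + 2 * cos ((real m + 1) * x) * sin (x/2)"
    using Suc by (simp add: algebra_simps)
  also have "2 * cos ((real m + 1) * x) * sin (x/2)
      = sin ((real m + 1) * x + x/2) - sin ((real m + 1) * x - x/2)"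
    by (simp add: sin_add sin_diff)
  also have "(real m + 1) * x + x/2 = (real (Suc m) + 1/2) * x" by (simp add: algebra_simps)
  also have "(real m + 1) * x - x/2 = (real m + 1/2) * x" by (simp add: algebra_simps)
  finally show ?case by simp
qed

lemma fejer_kernel_Suc: "fejer_kernel (Suc n) x = fejer_kernel n x + dirichlet_kernel n x"
proof -
  have "(\<Sum>k=1..Suc n. (real (Suc n) - real k) * cos (real k * x))
      = (\<Sum>k=1..n. (real n - real k) * cos (real k * x)) + (\<Sum>k=1..n. cos (real k * x))"
    by (simp add: sum.cl_ivl_Suc sum.distrib[symmetric] algebra_simps)
  then show ?thesis
    by (simp add: fejer_kernel_def dirichlet_kernel_def algebra_simps)
qed

lemma fejer_kernel_mult_sin_squared:
  "fejer_kernel n x * sin (x/2) ^ 2 = sin (real n * x / 2) ^ 2"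
proof (induction n)
  case 0
  then show ?case by (simp add: fejer_kernel_def)
next
  case (Suc n)
  have "fejer_kernel (Suc n) x * sin (x/2) ^ 2
      = sin (real n * x / 2) ^ 2 + dirichlet_kernel n x * sin (x/2) * sin (x/2)"
    using Suc by (simp add: fejer_kernel_Suc algebra_simps power2_eq_square)
  also have "\<dots> = sin (real n * x / 2) ^ 2 + sin ((real n + 1/2) * x) * sin (x/2)"
    by (simp add: dirichlet_kernel_mult_sin)
  also have "sin ((real n + 1/2) * x) * sin (x/2)
      = sin (real (Suc n) * x / 2) ^ 2 - sin (real n * x / 2) ^ 2"
    by (subst sin_squared_diff) (simp add: algebra_simps add_divide_distrib)
  finally show ?case by simp
qed

lemma cos_polynomial_in_mD:
  "(\<lambda>x. a 0 + (\<Sum>k=1..l. a k * cos (real k * x))) \<in> mD l"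
proof -
  define c where "c j = (if j = 0 then a 0 else if even j then a (j div 2) / sqrt 2 else 0)" for j
  have "(\<Sum>j\<le>2*l. c j * phi j x) = a 0 + (\<Sum>k=1..l. a k * cos (real k * x))" for x
  proof (induction l)
    case 0
    then show ?case by (simp add: c_def phi_def)
  next
    case (Suc l)
    have "2 * Suc l = Suc (Suc (2*l))" "Suc (Suc (2*l)) div 2 = Suc l" by simp_all
    then show ?case using Suc
      by (simp add: sum.atMost_Suc sum.cl_ivl_Suc phi_def c_def del: mult_Suc_right)
  qed
  then show ?thesis unfolding mD_def by (auto intro!: exI[of _ c])
qed

lemma fejer_kernel_in_mD: "fejer_kernel (Suc l) \<in> mD l"
proof -
  define a where "a k = (if k = 0 then real (Suc l) else 2 * (real (Suc l) - real k))" for k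
  have "fejer_kernel (Suc l) = (\<lambda>x. a 0 + (\<Sum>k=1..l. a k * cos (real k * x)))"
    by (auto simp: fejer_kernel_def a_def sum.cl_ivl_Suc sum_distrib_left algebra_simps)
  then show ?thesis using cos_polynomial_in_mD by simp
qed

lemma fejer_kernel_bounds:
  assumes "x \<in> {-pi..pi}" "x \<noteq> 0"
  shows "0 \<le> fejer_kernel n x" "fejer_kernel n x \<le> (pi / x)^2"
proof -
  have "(\<bar>x\<bar> / pi)^2 \<le> \<bar>sin (x/2)\<bar>^2"
    using abs_sin_half_ge assms by (intro power_mono) auto
  then have sin_ge: "(x / pi)^2 \<le> sin (x/2)^2" by (simp add: power_divide)
  moreover have "0 < (x / pi)^2" using assms by simp
  ultimately have sin_pos: "0 < sin (x/2)^2" by linarith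
  have G: "fejer_kernel n x = sin (real n * x / 2)^2 / sin (x/2)^2"
    using fejer_kernel_mult_sin_squared[of n x] sin_pos by (simp add: field_simps)
  then show "0 \<le> fejer_kernel n x" by simp
  have "fejer_kernel n x \<le> 1 / sin (x/2)^2"
    unfolding G using sin_pos by (intro divide_right_mono) (auto simp: abs_square_le_1)
  also have "\<dots> \<le> 1 / (x / pi)^2"
    using sin_ge sin_pos \<open>0 < (x / pi)^2\<close> by (intro divide_left_mono) auto
  finally show "fejer_kernel n x \<le> (pi / x)^2" by (simp add: power_divide)
qed

lemma sum_n_minus_k: "(\<Sum>k=1..n. real n - real k) = real n * (real n - 1) / 2"
proof (induction n)
  case 0
  then show ?case by simp
next
  case (Suc n)
  have "(\<Sum>k=1..Suc n. real (Suc n) - real k) = (\<Sum>k=1..n. (real n - real k) + 1)"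
    by (simp add: sum.cl_ivl_Suc algebra_simps)
  also have "\<dots> = (\<Sum>k=1..n. real n - real k) + real n"
    by (simp only: sum.distrib) simp
  finally show ?case using Suc by (simp add: field_simps)
qed

lemma abs_fejer_kernel_le: "\<bar>fejer_kernel n x\<bar> \<le> real n ^ 2"
proof -
  have "\<bar>\<Sum>k=1..n. (real n - real k) * cos (real k * x)\<bar> \<le> (\<Sum>k=1..n. real n - real k)"
    by (rule order_trans[OF sum_abs sum_mono]) (auto simp: abs_mult intro: mult_left_le)
  then show ?thesis
    unfolding fejer_kernel_def sum_n_minus_k by (simp add: power2_eq_square algebra_simps)
qed

lemma fejer_kernel_ge_near_zero:
  assumes "n \<ge> 1" "\<bar>x\<bar> \<le> 1 / real n"
  shows "real n ^ 2 / 2 \<le> fejer_kernel n x"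
proof -
  have cos_ge: "1/2 \<le> cos (real k * x)" if "k \<in> {1..n}" for k
  proof -
    have "real k * \<bar>x\<bar> \<le> real n * (1 / real n)"
      using that assms by (intro mult_mono) auto
    then have "\<bar>real k * x\<bar> \<le> real n * (1 / real n)" by (simp add: abs_mult)
    also have "\<dots> \<le> pi/3" using assms pi_gt3 by simp
    finally have "cos (pi/3) \<le> cos \<bar>real k * x\<bar>"
      by (intro cos_monotone_0_pi_le) auto
    then show ?thesis by (simp add: cos_60)
  qed
  have "(\<Sum>k=1..n. (real n - real k) * (1/2)) \<le> (\<Sum>k=1..n. (real n - real k) * cos (real k * x))"
    by (intro sum_mono mult_left_mono cos_ge) auto
  then have "real n * (real n - 1) / 4 \<le> (\<Sum>k=1..n. (real n - real k) * cos (real k * x))"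
    using sum_n_minus_k[of n] by (simp add: sum_divide_distrib[symmetric])
  then show ?thesis by (simp add: fejer_kernel_def power2_eq_square field_simps)
qed

lemma fejer_kernel_borel_measurable [measurable]: "fejer_kernel n \<in> borel_measurable borel"
  unfolding fejer_kernel_def by measurable

lemma prob_space_unifX: "prob_space unifX"
  unfolding unifX_def by (rule prob_space_uniform_measure) auto

lemma sets_unifX [measurable_cong, simp]: "sets unifX = sets borel"
  unfolding unifX_def by simp

lemma space_unifX [simp]: "space unifX = UNIV"
  unfolding unifX_def by simp

lemma measure_unifX:
  assumes "B \<in> sets borel"
  shows "measure unifX B = measure lborel ({-pi..pi} \<inter> B) / (2*pi)"
  unfolding unifX_def using assms by (subst measure_uniform_measure) auto

lemma measure_unifX_le_interval:
  assumes "B \<in> sets borel" "0 \<le> r" "{-pi..pi} \<inter> B \<subseteq> {-r..r}"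
  shows "measure unifX B \<le> r / pi"
proof -
  have "measure unifX B \<le> measure lborel {-r..r} / (2*pi)"
    unfolding measure_unifX[OF assms(1)] using assms
    by (intro divide_right_mono measure_mono_fmeasurable) (auto simp: fmeasurable_def)
  then show ?thesis using assms(2) by simp
qed

lemma L2norm_fejer_kernel_ge:
  assumes "n \<ge> 1"
  shows "sqrt (real n ^ 3 / (4*pi)) \<le> L2norm (fejer_kernel n)"
proof -
  interpret prob_space unifX by (rule prob_space_unifX)
  define I where "I = {-1/real n..1/real n}"
  have "1 / real n \<le> 1" using assms by simp
  then have "1 / real n \<le> pi" using pi_gt3 by linarith
  then have I_sub: "I \<subseteq> {-pi..pi}" unfolding I_def by auto
  have ind_le: "(real n ^ 2 / 2)^2 * indicator I x \<le> fejer_kernel n x ^ 2" for x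
  proof (cases "x \<in> I")
    case True
    then have "real n ^ 2 / 2 \<le> fejer_kernel n x"
      using assms by (intro fejer_kernel_ge_near_zero) (auto simp: I_def)
    then show ?thesis using True by (simp add: power_mono)
  qed simp
  have "integrable unifX (\<lambda>x. fejer_kernel n x ^ 2)"
  proof (rule integrable_const_bound[where B="(real n ^ 2)^2"])
    have "\<bar>fejer_kernel n x\<bar>^2 \<le> (real n ^ 2)^2" for x
      using abs_fejer_kernel_le by (intro power_mono) auto
    then show "AE x in unifX. norm (fejer_kernel n x ^ 2) \<le> (real n ^ 2)^2"
      by simp
  qed measurable
  then have "(\<integral>x. (real n ^ 2 / 2)^2 * indicator I x \<partial>unifX) \<le> (\<integral>x. fejer_kernel n x ^ 2 \<partial>unifX)"
    by (intro integral_mono ind_le) (auto simp: I_def intro!: integrable_const_bound[where B=1])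
  moreover have "measure unifX I = (2 / real n) / (2*pi)"
    using I_sub assms unfolding measure_unifX[OF borel_closed[OF closed_atLeastAtMost]] I_def
    by (simp add: Int_absorb1)
  ultimately have "(real n ^ 2 / 2)^2 * ((2 / real n) / (2*pi)) \<le> (\<integral>x. fejer_kernel n x ^ 2 \<partial>unifX)"
    by (simp add: I_def)
  moreover have "(real n ^ 2 / 2)^2 * ((2 / real n) / (2*pi)) = real n ^ 3 / (4*pi)"
    using assms by (simp add: field_simps power_def)
  ultimately show ?thesis unfolding L2norm_def by simp
qed

lemma measure_fejer_kernel_ge:
  assumes "t > 0"
  shows "measure unifX {x. t \<le> \<bar>fejer_kernel n x\<bar>} \<le> 1 / sqrt t"
proof -
  define r where "r = pi / sqrt t"
  have "{-pi..pi} \<inter> {x. t \<le> \<bar>fejer_kernel n x\<bar>} \<subseteq> {-r..r}"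
  proof (clarify)
    fix x assume x: "x \<in> {-pi..pi}" "t \<le> \<bar>fejer_kernel n x\<bar>"
    show "x \<in> {-r..r}"
    proof (cases "x = 0")
      case False
      then have "t \<le> (pi / x)^2" using x fejer_kernel_bounds[of x n] by linarith
      then have "sqrt t \<le> sqrt ((pi / x)^2)" by (rule real_sqrt_le_mono)
      then have "sqrt t \<le> pi / \<bar>x\<bar>" by simp
      then have "\<bar>x\<bar> \<le> r" using assms False by (simp add: r_def le_divide_eq mult.commute)
      then show ?thesis by auto
    qed (use assms in \<open>simp add: r_def\<close>)
  qed
  then have "measure unifX {x. t \<le> \<bar>fejer_kernel n x\<bar>} \<le> r / pi"
    using assms by (intro measure_unifX_le_interval) (auto simp: r_def)
  then show ?thesis by (simp add: r_def)
qed

lemma odd_powr_three_halves_le: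
  "real (2*l+1) powr (3/2) / 16 \<le> sqrt (real (Suc l) ^ 3 / (4*pi))"
proof -
  have "real (2*l+1) ^ 3 \<le> (2 * real (Suc l)) ^ 3" by (intro power_mono) auto
  also have "\<dots> = 8 * real (Suc l) ^ 3" by (simp only: power_mult_distrib) simp
  finally have "pi * real (2*l+1) ^ 3 \<le> 4 * (8 * real (Suc l) ^ 3)"
    using pi_less_4 by (intro mult_mono) auto
  also have "\<dots> \<le> 64 * real (Suc l) ^ 3" by simp
  finally have "real (2*l+1) ^ 3 / 256 \<le> real (Suc l) ^ 3 / (4*pi)"
    by (simp add: field_simps)
  then have "sqrt (real (2*l+1) ^ 3 / 256) \<le> sqrt (real (Suc l) ^ 3 / (4*pi))"
    by (rule real_sqrt_le_mono)
  moreover have "sqrt (real (2*l+1) ^ 3 / 256) = real (2*l+1) powr (3/2) / 16"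
    by (simp add: real_sqrt_divide powr_half_sqrt[symmetric] powr_powr powr_realpow[symmetric] flip: powr_numeral)
  ultimately show ?thesis by linarith
qed

lemma one_div_sqrt_mult_powr:
  assumes "(k::real) > 0" "(D::real) > 0"
  shows "1 / sqrt (k * (D powr (3/2) / 16)) = 4 * k powr (-1/2) * D powr (-3/4)"
proof -
  have eq: "sqrt (k * (D powr (3/2) / 16)) = k powr (1/2) * D powr (3/4) / 4"
    using assms by (simp add: powr_half_sqrt[symmetric] powr_mult powr_divide powr_powr)
  show ?thesis unfolding eq by (simp add: powr_minus_divide)
qed

theorem proposition2:
  "\<exists>C>0. \<forall>(l::nat) (beta0::real) (kappa0::real).
     kappa0 > 0 \<longrightarrow> beta0 > 0 \<longrightarrow> small_ball (mD l) beta0 kappa0 \<longrightarrow>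
     beta0 \<le> C * kappa0 powr (-1/2) * real (2*l+1) powr (-3/4)"
proof (intro exI[of _ 4] conjI allI impI)
  fix l :: nat and beta0 kappa0 :: real
  assume kappa0: "kappa0 > 0" and "beta0 > 0" and small_ball: "small_ball (mD l) beta0 kappa0"
  define D where "D = real (2*l+1)"
  define L where "L = L2norm (fejer_kernel (Suc l))"
  have D_bound: "0 < D powr (3/2) / 16" by (simp add: D_def)
  have "sqrt (real (Suc l) ^ 3 / (4*pi)) \<le> L"
    unfolding L_def by (rule L2norm_fejer_kernel_ge) simp
  then have L_ge: "D powr (3/2) / 16 \<le> L"
    using odd_powr_three_halves_le[of l] unfolding D_def by linarith
  with D_bound have L_pos: "0 < L" by linarith
  have "beta0 \<le> measure unifX {x. kappa0 * L \<le> \<bar>fejer_kernel (Suc l) x\<bar>}"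
    using small_ball fejer_kernel_in_mD[of l] unfolding small_ball_def L_def by simp
  also have "\<dots> \<le> 1 / sqrt (kappa0 * L)"
    using kappa0 L_pos by (intro measure_fejer_kernel_ge mult_pos_pos)
  also have "\<dots> \<le> 1 / sqrt (kappa0 * (D powr (3/2) / 16))"
    using kappa0 D_bound L_ge L_pos
    by (intro divide_left_mono real_sqrt_le_mono mult_left_mono mult_pos_pos real_sqrt_gt_zero) auto
  also have "\<dots> = 4 * kappa0 powr (-1/2) * D powr (-3/4)"
    using kappa0 by (intro one_div_sqrt_mult_powr) (auto simp: D_def)
  finally show "beta0 \<le> 4 * kappa0 powr (-1/2) * real (2*l+1) powr (-3/4)"
    unfolding D_def .
qed simp

end
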